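(* Consider a single transmission ($L=1$) over the Rayleigh block-fading Gaussian wiretap channel, with mean SNRs $\gamma_{\textsf{d}}>0$ (legitimate decoder) and $\gamma_{\textsf{e}}>0$ (eavesdropper), and constraints $\xi_{\sf{c}},\xi_{\sf{s}}\in(0,1)$. (i) There exist rates $\textsf{R}\ge0$ and $\textsf{R}_1\ge0$ with $\mathcal{P}_{\sf{co}}\le\xi_{\sf{c}}$ and $\mathcal{P}_{\sf{so}}\le\xi_{\sf{s}}$ if and only if $\xi_{\sf{s}}\ge(1-\xi_{\sf{c}})^{\gamma_{\textsf{d}}/\gamma_{\textsf{e}}}$, equivalently $\xi_{\sf{s}}^{\gamma_{\textsf{e}}}-(1-\xi_{\sf{c}})^{\gamma_{\textsf{d}}}\ge0$. (ii) For a fixed $\textsf{R}\ge0$, there exists $\textsf{R}_1\ge0$ with $\mathcal{P}_{\sf{co}}\le\xi_{\sf{c}}$ and $\mathcal{P}_{\sf{so}}\le\xi_{\sf{s}}$ if and only if $$\textsf{R}\le\log_2\Big(\frac{1-\gamma_{\textsf{d}}\ln(1-\xi_{\sf{c}})}{1-\gamma_{\textsf{e}}\ln(\xi_{\sf{s}})}\Big).$$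
   Context: Channel: $Y=h_{\textsf{d}}X+N_{\textsf{d}}$, $Z=h_{\textsf{e}}X+N_{\textsf{e}}$ with unit-variance Gaussian noises and input power $1$. $\textsf{SNR}_{\textsf{d}}=|h_{\textsf{d}}|^2$ and $\textsf{SNR}_{\textsf{e}}=|h_{\textsf{e}}|^2$ are independent exponential random variables with means $\gamma_{\textsf{d}}$ and $\gamma_{\textsf{e}}$ (CDF $1-e^{-x/\gamma}$ for $x\ge0$). Mutual informations: $I(X;Y)=\log_2(1+\textsf{SNR}_{\textsf{d}})$, $I(X;Z)=\log_2(1+\textsf{SNR}_{\textsf{e}})$. With secrecy rate $\textsf{R}$ and dummy-message rate $\textsf{R}_1$, the connection outage probability is $\mathcal{P}_{\sf{co}}=\mathcal{P}(\textsf{R}+\textsf{R}_1>\log_2(1+\textsf{SNR}_{\textsf{d}}))$ and the secrecy outage probability is $\mathcal{P}_{\sf{so}}=\mathcal{P}(\textsf{R}_1<\log_2(1+\textsf{SNR}_{\textsf{e}}))$. *)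

theory Defs
  imports "HOL-Probability.Probability"
begin

definition snr_dist :: "real \<Rightarrow> real measure" where
  "snr_dist \<gamma> = density lborel (exponential_density (1 / \<gamma>))"

definition P_co :: "real \<Rightarrow> real \<Rightarrow> real \<Rightarrow> real" where
  "P_co \<gamma>d R R1 = measure (snr_dist \<gamma>d) {x. R + R1 > log 2 (1 + x)}"

definition P_so :: "real \<Rightarrow> real \<Rightarrow> real" where
  "P_so \<gamma>e R1 = measure (snr_dist \<gamma>e) {x. R1 < log 2 (1 + x)}"

end

theory Submission imports Defs begin

text \<open>With \<open>A = 1 - \<gamma>d ln (1 - \<xi>c)\<close> and \<open>B = 1 - \<gamma>e ln \<xi>s\<close>, the exponential law of the SNRs turns
  the connection constraint into \<open>2^(R + R1) \<le> A\<close> and the secrecy constraint into \<open>B \<le> 2^R1\<close>.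
  The best dummy rate is therefore \<open>R1 = log2 B\<close>, so a secrecy rate \<open>R\<close> is feasible iff
  \<open>2^R B \<le> A\<close>, and some rate is feasible iff \<open>B \<le> A\<close>, i.e. \<open>\<gamma>d ln (1 - \<xi>c) \<le> \<gamma>e ln \<xi>s\<close>.\<close>

lemma prob_space_snr_dist: "\<gamma> > 0 \<Longrightarrow> prob_space (snr_dist \<gamma>)"
  unfolding snr_dist_def by (rule prob_space_exponential_density) simp

lemma distributed_snr_dist:
  "\<gamma> > 0 \<Longrightarrow> distributed (snr_dist \<gamma>) lborel (\<lambda>x. x) (exponential_density (1 / \<gamma>))"
  unfolding distributed_def snr_dist_def by (auto simp: distr_id2)

lemma sets_snr_dist [simp]: "sets (snr_dist \<gamma>) = sets borel"
  unfolding snr_dist_def by simp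

lemma space_snr_dist [simp]: "space (snr_dist \<gamma>) = UNIV"
  unfolding snr_dist_def by simp

lemma AE_snr_dist_nonneg_neq: "\<gamma> > 0 \<Longrightarrow> AE x in snr_dist \<gamma>. 0 \<le> x \<and> x \<noteq> c"
proof -
  have "AE x in lborel. x \<noteq> c" by (rule AE_lborel_singleton)
  then have "AE x in lborel. 0 < ennreal (exponential_density (1 / \<gamma>) x) \<longrightarrow> 0 \<le> x \<and> x \<noteq> c"
    by eventually_elim (auto simp: exponential_density_def split: if_splits)
  then show ?thesis unfolding snr_dist_def by (subst AE_density) auto
qed

lemma measure_snr_dist_le:
  assumes "\<gamma> > 0" "0 \<le> a"
  shows "measure (snr_dist \<gamma>) {x. x \<le> a} = 1 - exp (- a / \<gamma>)"
proof -
  interpret prob_space "snr_dist \<gamma>" using prob_space_snr_dist assms by blast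
  have "\<P>(x in snr_dist \<gamma>. x \<le> a) = 1 - exp (- a * (1 / \<gamma>))"
    by (rule exponential_distributedD_le[OF distributed_snr_dist]) (use assms in auto)
  then show ?thesis by simp
qed

lemma measure_snr_dist_gt:
  assumes "\<gamma> > 0" "0 \<le> a"
  shows "measure (snr_dist \<gamma>) {x. a < x} = exp (- a / \<gamma>)"
proof -
  interpret prob_space "snr_dist \<gamma>" using prob_space_snr_dist assms by blast
  have "\<P>(x in snr_dist \<gamma>. a < x) = exp (- a * (1 / \<gamma>))"
    by (rule exponential_distributedD_gt[OF distributed_snr_dist]) (use assms in auto)
  then show ?thesis by simp
qed

lemma measure_snr_dist_log_less:
  assumes "\<gamma> > 0" "0 \<le> s"
  shows "measure (snr_dist \<gamma>) {x. log 2 (1 + x) < s} = 1 - exp (- (2 powr s - 1) / \<gamma>)"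
proof -
  have "measure (snr_dist \<gamma>) {x. log 2 (1 + x) < s} = measure (snr_dist \<gamma>) {x. x \<le> 2 powr s - 1}"
  proof (rule measure_eq_AE)
    show "AE x in snr_dist \<gamma>. x \<in> {x. log 2 (1 + x) < s} \<longleftrightarrow> x \<in> {x. x \<le> 2 powr s - 1}"
      using AE_snr_dist_nonneg_neq[OF assms(1), of "2 powr s - 1"]
      by eventually_elim (auto simp: log_less_iff)
  qed auto
  also have "\<dots> = 1 - exp (- (2 powr s - 1) / \<gamma>)"
    using assms by (intro measure_snr_dist_le) (auto simp: ge_one_powr_ge_zero)
  finally show ?thesis .
qed

lemma measure_snr_dist_less_log:
  assumes "\<gamma> > 0" "0 \<le> s"
  shows "measure (snr_dist \<gamma>) {x. s < log 2 (1 + x)} = exp (- (2 powr s - 1) / \<gamma>)"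
proof -
  have "measure (snr_dist \<gamma>) {x. s < log 2 (1 + x)} = measure (snr_dist \<gamma>) {x. 2 powr s - 1 < x}"
  proof (rule measure_eq_AE)
    show "AE x in snr_dist \<gamma>. x \<in> {x. s < log 2 (1 + x)} \<longleftrightarrow> x \<in> {x. 2 powr s - 1 < x}"
      using AE_snr_dist_nonneg_neq[OF assms(1), of 0]
      by eventually_elim (auto simp: less_log_iff)
  qed auto
  also have "\<dots> = exp (- (2 powr s - 1) / \<gamma>)"
    using assms by (intro measure_snr_dist_gt) (auto simp: ge_one_powr_ge_zero)
  finally show ?thesis .
qed

lemma P_co_le_iff:
  assumes "\<gamma>d > 0" "0 < \<xi>c" "\<xi>c < 1" "0 \<le> R" "0 \<le> R1"
  shows "P_co \<gamma>d R R1 \<le> \<xi>c \<longleftrightarrow> 2 powr (R + R1) \<le> 1 - \<gamma>d * ln (1 - \<xi>c)"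
proof -
  have "P_co \<gamma>d R R1 \<le> \<xi>c \<longleftrightarrow> exp (- (2 powr (R + R1) - 1) / \<gamma>d) \<ge> 1 - \<xi>c"
    unfolding P_co_def using measure_snr_dist_log_less[OF assms(1), of "R + R1"] assms by auto
  also have "\<dots> \<longleftrightarrow> ln (1 - \<xi>c) \<le> - (2 powr (R + R1) - 1) / \<gamma>d"
    using assms by (metis diff_gt_0_iff_gt exp_le_cancel_iff exp_ln)
  also have "\<dots> \<longleftrightarrow> 2 powr (R + R1) \<le> 1 - \<gamma>d * ln (1 - \<xi>c)"
    using assms by (simp add: le_divide_eq algebra_simps)
  finally show ?thesis .
qed

lemma P_so_le_iff:
  assumes "\<gamma>e > 0" "0 < \<xi>s" "0 \<le> R1"
  shows "P_so \<gamma>e R1 \<le> \<xi>s \<longleftrightarrow> 1 - \<gamma>e * ln \<xi>s \<le> 2 powr R1"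
proof -
  have "P_so \<gamma>e R1 \<le> \<xi>s \<longleftrightarrow> - (2 powr R1 - 1) / \<gamma>e \<le> ln \<xi>s"
    unfolding P_so_def using measure_snr_dist_less_log[OF assms(1,3)] assms(2) by (simp add: ln_ge_iff)
  also have "\<dots> \<longleftrightarrow> 1 - \<gamma>e * ln \<xi>s \<le> 2 powr R1"
    using assms by (simp add: divide_le_eq algebra_simps)
  finally show ?thesis .
qed

lemma exists_dummy_rate_iff:
  assumes "\<gamma>d > 0" "\<gamma>e > 0" "0 < \<xi>c" "\<xi>c < 1" "0 < \<xi>s" "\<xi>s < 1" "0 \<le> R"
  shows "(\<exists>R1\<ge>0. P_co \<gamma>d R R1 \<le> \<xi>c \<and> P_so \<gamma>e R1 \<le> \<xi>s) \<longleftrightarrow>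
           2 powr R * (1 - \<gamma>e * ln \<xi>s) \<le> 1 - \<gamma>d * ln (1 - \<xi>c)"
    (is "?feasible \<longleftrightarrow> 2 powr R * ?B \<le> ?A")
proof
  assume ?feasible
  then obtain R1 where "R1 \<ge> 0" "2 powr (R + R1) \<le> ?A" "?B \<le> 2 powr R1"
    using P_co_le_iff P_so_le_iff assms by blast
  then have "2 powr R * ?B \<le> 2 powr R * 2 powr R1"
    by (intro mult_left_mono) simp_all
  then show "2 powr R * ?B \<le> ?A"
    using \<open>2 powr (R + R1) \<le> ?A\<close> by (metis order_trans powr_add)
next
  assume feasible_R: "2 powr R * ?B \<le> ?A"
  have "1 \<le> ?B"
    using assms by (simp add: mult_nonneg_nonpos)
  then have R1: "log 2 ?B \<ge> 0" "2 powr log 2 ?B = ?B"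
    by simp_all
  then have "2 powr (R + log 2 ?B) \<le> ?A"
    using feasible_R by (simp add: powr_add)
  with R1 show ?feasible
    using P_co_le_iff[OF assms(1,3,4,7) R1(1)] P_so_le_iff[OF assms(2,5) R1(1)] by auto
qed

lemma exists_rates_iff:
  assumes "\<gamma>d > 0" "\<gamma>e > 0" "0 < \<xi>c" "\<xi>c < 1" "0 < \<xi>s" "\<xi>s < 1"
  shows "(\<exists>R\<ge>0. \<exists>R1\<ge>0. P_co \<gamma>d R R1 \<le> \<xi>c \<and> P_so \<gamma>e R1 \<le> \<xi>s) \<longleftrightarrow>
           \<gamma>d * ln (1 - \<xi>c) \<le> \<gamma>e * ln \<xi>s"
proof -
  let ?A = "1 - \<gamma>d * ln (1 - \<xi>c)" and ?B = "1 - \<gamma>e * ln \<xi>s"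
  have "?B \<ge> 1"
    using assms by (simp add: mult_nonneg_nonpos)
  then have B_le: "?B \<le> 2 powr R * ?B" if "R \<ge> 0" for R :: real
    using that by (simp add: mult_le_cancel_right1 ge_one_powr_ge_zero)
  have "(\<exists>R\<ge>0. \<exists>R1\<ge>0. P_co \<gamma>d R R1 \<le> \<xi>c \<and> P_so \<gamma>e R1 \<le> \<xi>s) \<longleftrightarrow>
          (\<exists>R\<ge>0. 2 powr R * ?B \<le> ?A)"
    using exists_dummy_rate_iff[OF assms] by auto
  also have "\<dots> \<longleftrightarrow> ?B \<le> ?A"
  proof
    assume "\<exists>R\<ge>0. 2 powr R * ?B \<le> ?A"
    then show "?B \<le> ?A"
      using B_le by (meson order.trans)
  next
    assume "?B \<le> ?A"
    then show "\<exists>R\<ge>0. 2 powr R * ?B \<le> ?A"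
      by (intro exI[of _ 0]) simp
  qed
  also have "\<dots> \<longleftrightarrow> \<gamma>d * ln (1 - \<xi>c) \<le> \<gamma>e * ln \<xi>s"
    by linarith
  finally show ?thesis .
qed

lemma exists_dummy_rate_iff_log:
  assumes "\<gamma>d > 0" "\<gamma>e > 0" "0 < \<xi>c" "\<xi>c < 1" "0 < \<xi>s" "\<xi>s < 1" "0 \<le> R"
  shows "(\<exists>R1\<ge>0. P_co \<gamma>d R R1 \<le> \<xi>c \<and> P_so \<gamma>e R1 \<le> \<xi>s) \<longleftrightarrow>
           R \<le> log 2 ((1 - \<gamma>d * ln (1 - \<xi>c)) / (1 - \<gamma>e * ln \<xi>s))"
proof -
  let ?A = "1 - \<gamma>d * ln (1 - \<xi>c)" and ?B = "1 - \<gamma>e * ln \<xi>s"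
  have "?B \<ge> 1" "?A \<ge> 1"
    using assms by (simp_all add: mult_nonneg_nonpos)
  then have "2 powr R * ?B \<le> ?A \<longleftrightarrow> R \<le> log 2 (?A / ?B)"
    by (simp add: le_log_iff pos_le_divide_eq)
  then show ?thesis
    using exists_dummy_rate_iff[OF assms] by simp
qed

lemma powr_le_powr_iff_mult_ln:
  fixes a b c d :: real
  assumes "0 < a" "0 < b"
  shows "a powr c \<le> b powr d \<longleftrightarrow> c * ln a \<le> d * ln b"
  using assms by (simp add: powr_def)

theorem theorem2:
  fixes \<gamma>d \<gamma>e \<xi>c \<xi>s :: real
  assumes "\<gamma>d > 0" and "\<gamma>e > 0"
    and "0 < \<xi>c" and "\<xi>c < 1" and "0 < \<xi>s" and "\<xi>s < 1"
  shows "((\<exists>R\<ge>0. \<exists>R1\<ge>0. P_co \<gamma>d R R1 \<le> \<xi>c \<and> P_so \<gamma>e R1 \<le> \<xi>s)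
            \<longleftrightarrow> \<xi>s \<ge> (1 - \<xi>c) powr (\<gamma>d / \<gamma>e))
      \<and> ((\<exists>R\<ge>0. \<exists>R1\<ge>0. P_co \<gamma>d R R1 \<le> \<xi>c \<and> P_so \<gamma>e R1 \<le> \<xi>s)
            \<longleftrightarrow> \<xi>s powr \<gamma>e - (1 - \<xi>c) powr \<gamma>d \<ge> 0)
      \<and> (\<forall>R\<ge>0. (\<exists>R1\<ge>0. P_co \<gamma>d R R1 \<le> \<xi>c \<and> P_so \<gamma>e R1 \<le> \<xi>s)
            \<longleftrightarrow> R \<le> log 2 ((1 - \<gamma>d * ln (1 - \<xi>c)) / (1 - \<gamma>e * ln \<xi>s)))"
proof -
  have "(1 - \<xi>c) powr (\<gamma>d / \<gamma>e) \<le> \<xi>s \<longleftrightarrow> \<gamma>d / \<gamma>e * ln (1 - \<xi>c) \<le> 1 * ln \<xi>s"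
    using assms powr_le_powr_iff_mult_ln[of "1 - \<xi>c" \<xi>s "\<gamma>d / \<gamma>e" 1] by simp
  also have "\<dots> \<longleftrightarrow> \<gamma>d * ln (1 - \<xi>c) \<le> \<gamma>e * ln \<xi>s"
    using assms by (simp add: divide_le_eq mult.commute)
  finally have "\<xi>s \<ge> (1 - \<xi>c) powr (\<gamma>d / \<gamma>e) \<longleftrightarrow> \<gamma>d * ln (1 - \<xi>c) \<le> \<gamma>e * ln \<xi>s" .
  moreover have "\<xi>s powr \<gamma>e - (1 - \<xi>c) powr \<gamma>d \<ge> 0 \<longleftrightarrow> \<gamma>d * ln (1 - \<xi>c) \<le> \<gamma>e * ln \<xi>s"
    using assms powr_le_powr_iff_mult_ln[of "1 - \<xi>c" \<xi>s \<gamma>d \<gamma>e] by simp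
  ultimately show ?thesis
    using exists_rates_iff[OF assms] exists_dummy_rate_iff_log[OF assms] by blast
qed

end
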